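(* Let $S=(X,\prec,\sqsubset)$ be a finite so-structure. Then: (1) for all $\alpha,\beta\in X$: $\alpha\in[\beta]$ if and only if for every $\lhd\in ext(S)$, either $\alpha=\beta$ or $\alpha\frown_\lhd\beta$; (2) there exists $\lhd\in ext(S)$ such that $\Omega_\lhd=[\gamma_1]\dots[\gamma_k]$ for some $\gamma_1,\dots,\gamma_k\in X$, i.e. every step of $\Omega_\lhd$ is a $\equiv_\sqsubset$-equivalence class; (3) if $[\alpha]\,(\hat\sqsubset)^{\mathrm{cov}}\,[\beta]$, then there exists $\lhd\in ext(S)$ with $\Omega_\lhd=[\delta_1]\dots[\delta_m]$ for some $\delta_1,\dots,\delta_m\in X$, and some $1\le i<m$ with $\alpha\in[\delta_i]$ and $\beta\in[\delta_{i+1}]$.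
   Context: A stratified order structure (so-structure) is a triple $S=(X,\prec,\sqsubset)$ with $\prec,\sqsubset\subseteq X\times X$ such that for all $\alpha,\beta,\gamma\in X$: (S1) $\neg(\alpha\sqsubset\alpha)$; (S2) $\alpha\prec\beta\Rightarrow\alpha\sqsubset\beta$; (S3) $\alpha\sqsubset\beta\sqsubset\gamma\wedge\alpha\neq\gamma\Rightarrow\alpha\sqsubset\gamma$; (S4) $(\alpha\sqsubset\beta\wedge\beta\prec\gamma)\vee(\alpha\prec\beta\wedge\beta\sqsubset\gamma)\Rightarrow\alpha\prec\gamma$. For a relation $\lhd$ on $X$: $\alpha\frown_\lhd\beta$ iff $\alpha\neq\beta$, $\neg(\alpha\lhd\beta)$ and $\neg(\beta\lhd\alpha)$; $\lhd^\frown:=\lhd\cup\frown_\lhd$. A partial order $\lhd$ is stratified if $\frown_\lhd\cup\mathrm{id}_X$ is an equivalence relation. For a stratified order $\lhd$ on a finite set $X$, $\Omega_\lhd=B_1\dots B_k$ denotes the unique sequence of nonempty pairwise disjoint sets with union $X$ such that $\lhd=\bigcup_{i<j}B_i\times B_j$. A stratified extension of $S$ is a stratified order $\lhd$ on $X$ with $\prec\subseteq\lhd$ and $\sqsubset\subseteq\lhd^\frown$; $ext(S)$ is the set of all stratified extensions of $S$. Define $\alpha\equiv_\sqsubset\beta$ iff $\alpha=\beta$ or ($\alpha\sqsubset\beta$ and $\beta\sqsubset\alpha$); $[\alpha]$ is the equivalence class of $\alpha$. On the classes, $[\alpha]\,\hat\sqsubset\,[\beta]$ iff $[\alpha]\neq[\beta]$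 and $([\alpha]\times[\beta])\cap\sqsubset\neq\emptyset$. For a relation $R$, its covering relation is $R^{\mathrm{cov}}:=\{(x,y): xRy\wedge\neg\exists z\,(xRz\wedge zRy)\}$. *)

theory Defs
  imports Main
begin

definition so_structure :: "'a set \<Rightarrow> 'a rel \<Rightarrow> 'a rel \<Rightarrow> bool" where
  "so_structure X prec sq \<longleftrightarrow>
     prec \<subseteq> X \<times> X \<and> sq \<subseteq> X \<times> X \<and>
     (\<forall>a\<in>X. (a, a) \<notin> sq) \<and>
     (\<forall>a\<in>X. \<forall>b\<in>X. (a, b) \<in> prec \<longrightarrow> (a, b) \<in> sq) \<and>
     (\<forall>a\<in>X. \<forall>b\<in>X. \<forall>c\<in>X. (a, b) \<in> sq \<and> (b, c) \<in> sq \<and> a \<noteq> c \<longrightarrow> (a, c) \<in> sq) \<and>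
     (\<forall>a\<in>X. \<forall>b\<in>X. \<forall>c\<in>X.
        ((a, b) \<in> sq \<and> (b, c) \<in> prec) \<or> ((a, b) \<in> prec \<and> (b, c) \<in> sq) \<longrightarrow> (a, c) \<in> prec)"

definition frown :: "'a set \<Rightarrow> 'a rel \<Rightarrow> 'a rel" where
  "frown X R = {(a, b). a \<in> X \<and> b \<in> X \<and> a \<noteq> b \<and> (a, b) \<notin> R \<and> (b, a) \<notin> R}"

definition partial_order_on_X :: "'a set \<Rightarrow> 'a rel \<Rightarrow> bool" where
  "partial_order_on_X X R \<longleftrightarrow> R \<subseteq> X \<times> X \<and> irrefl R \<and> trans R"

definition stratified_order :: "'a set \<Rightarrow> 'a rel \<Rightarrow> bool" where
  "stratified_order X R \<longleftrightarrow> partial_order_on_X X R \<and> equiv X (frown X R \<union> Id_on X)"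

definition ext :: "'a set \<Rightarrow> 'a rel \<Rightarrow> 'a rel \<Rightarrow> 'a rel set" where
  "ext X prec sq = {R. stratified_order X R \<and> prec \<subseteq> R \<and> sq \<subseteq> R \<union> frown X R}"

text \<open>step_seq X R Bs: Bs is the step sequence \<Omega>_R of R
  (nonempty, pairwise disjoint steps covering X, with R = union of B_i x B_j for i < j).\<close>
definition step_seq :: "'a set \<Rightarrow> 'a rel \<Rightarrow> 'a set list \<Rightarrow> bool" where
  "step_seq X R Bs \<longleftrightarrow>
     (\<forall>i < length Bs. Bs ! i \<noteq> {}) \<and>
     (\<forall>i < length Bs. \<forall>j < length Bs. i \<noteq> j \<longrightarrow> Bs ! i \<inter> Bs ! j = {}) \<and>
     \<Union>(set Bs) = X \<and>
     R = (\<Union>i < length Bs. \<Union>j \<in> {i<..<length Bs}. Bs ! i \<times> Bs ! j)"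

definition sq_class :: "'a set \<Rightarrow> 'a rel \<Rightarrow> 'a \<Rightarrow> 'a set" where
  "sq_class X sq a = {b \<in> X. b = a \<or> ((a, b) \<in> sq \<and> (b, a) \<in> sq)}"

definition hat_sq :: "'a set \<Rightarrow> 'a rel \<Rightarrow> 'a set rel" where
  "hat_sq X sq = {(sq_class X sq a, sq_class X sq b) | a b. a \<in> X \<and> b \<in> X \<and>
      sq_class X sq a \<noteq> sq_class X sq b \<and>
      (sq_class X sq a \<times> sq_class X sq b) \<inter> sq \<noteq> {}}"

definition cov :: "'b rel \<Rightarrow> 'b rel" where
  "cov R = {(x, y). (x, y) \<in> R \<and> \<not> (\<exists>z. (x, z) \<in> R \<and> (z, y) \<in> R)}"

end

theory Submission
  imports Defs
begin

(* Call a, b equivalent when a = b or a \<sqsubset> b \<sqsubset> a; the classes [a] are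
   ordered by the lifted relation hat_sq, which is a strict partial order.
   (i) Any list of nonempty pairwise disjoint blocks B_1 ... B_k determines the
   stratified order "earlier block before later block", whose step sequence is
   exactly that list and whose incomparability relation is "same block".
   (ii) Every finite strict partial order has a linear extension, listed as a
   sequence; if p is covered by q, one can even place q right after p.
   (iii) Listing the classes along a linear extension of hat_sq and applying (i)
   yields a stratified extension of S whose steps are the classes.  This gives
   part (2), the backward direction of part (1) (elements of different classes
   are comparable there), and, with the covering version of (ii), part (3).
   The forward direction of part (1) holds in every extension: two mutually
   \<sqsubset>-related elements can be ordered in neither direction. *)


section \<open>Linear extensions of finite strict partial orders\<close>

definition linearizes :: "'b rel \<Rightarrow> 'b set \<Rightarrow> 'b list \<Rightarrow> bool" where
  "linearizes P A L \<longleftrightarrow> set L = A \<and> distinct L \<and> sorted_wrt (\<lambda>x y. (y, x) \<notin> P) L"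

text \<open>Every finite strict partial order has a linear extension: sort by the number
  of predecessors, which strictly increases along P.\<close>
lemma linearization_exists:
  assumes "finite A" "irrefl P" "trans P"
  shows "\<exists>L. linearizes P A L"
proof -
  define rank where "rank c = card {e \<in> A. (e, c) \<in> P}" for c
  have rank_less: "rank d < rank c" if "(d, c) \<in> P" "d \<in> A" for c d
  proof -
    have "{e \<in> A. (e, d) \<in> P} \<subset> {e \<in> A. (e, c) \<in> P}"
      using that assms(2,3) unfolding irrefl_def trans_def by blast
    then show ?thesis unfolding rank_def by (simp add: assms(1) psubset_card_mono)
  qed
  obtain L0 where L0: "set L0 = A" "distinct L0"
    using finite_distinct_list[OF assms(1)] by blast
  define L where "L = sort_key rank L0"
  have L: "set L = A" "distinct L" using L0 by (auto simp: L_def)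
  have "sorted_wrt (\<lambda>x y. rank x \<le> rank y) L"
    using sorted_sort_key[of rank L0] by (simp add: L_def sorted_wrt_map)
  then have "sorted_wrt (\<lambda>x y. (y, x) \<notin> P) L"
    by (rule sorted_wrt_mono_rel[rotated]) (use rank_less L in \<open>fastforce simp: leD\<close>)
  moreover note L
  ultimately show ?thesis unfolding linearizes_def by blast
qed

text \<open>If q covers p, there is a linear extension in which q immediately follows p:
  first list the elements below q other than p, then p and q, then the rest.\<close>
lemma linearization_with_cover:
  assumes "finite A" "irrefl P" "trans P" "P \<subseteq> A \<times> A" and pq: "(p, q) \<in> cov P"
  shows "\<exists>L1 L2. linearizes P A (L1 @ [p, q] @ L2)"
proof -
  have pq_P: "(p, q) \<in> P" and no_between: "\<And>z. (p, z) \<in> P \<Longrightarrow> (z, q) \<notin> P"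
    using pq unfolding cov_def by auto
  have irr: "\<And>c. (c, c) \<notin> P" using assms(2) unfolding irrefl_def by blast
  have tr: "\<And>x y z. (x, y) \<in> P \<Longrightarrow> (y, z) \<in> P \<Longrightarrow> (x, z) \<in> P"
    using assms(3) unfolding trans_def by blast
  have pqA: "p \<in> A" "q \<in> A" "p \<noteq> q" using pq_P assms(4) irr by auto
  define D where "D = {c \<in> A. (c, q) \<in> P \<and> c \<noteq> p}"
  define U where "U = A - D - {p, q}"
  have "finite D" "finite U" using assms(1) unfolding D_def U_def by auto
  then obtain L1 L2 where L1: "linearizes P D L1" and L2: "linearizes P U L2"
    using linearization_exists[OF _ assms(2,3)] by meson
  text \<open>Nothing after L1 lies below an element of D, since D is closed downwards
    except for p, and p is not below anything below q.\<close>
  have D_first: "(y, x) \<notin> P" if "x \<in> D" "y \<in> set ([p, q] @ L2)" for x y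
  proof
    assume yx: "(y, x) \<in> P"
    have "(x, q) \<in> P" using that(1) D_def by auto
    then have "(y, q) \<in> P" using tr yx by blast
    then show False
      using that L2 no_between yx assms(4) irr unfolding D_def U_def linearizes_def by auto
  qed
  have U_last: "(y, p) \<notin> P \<and> (y, q) \<notin> P" if "y \<in> U" for y
  proof -
    have "(y, q) \<notin> P" using that assms(4) unfolding U_def D_def by auto
    then show ?thesis using tr pq_P by blast
  qed
  have "(q, p) \<notin> P" using tr pq_P irr by blast
  then have "sorted_wrt (\<lambda>x y. (y, x) \<notin> P) (L1 @ [p, q] @ L2)"
    using L1 L2 D_first U_last unfolding linearizes_def sorted_wrt_append by auto
  moreover have "set (L1 @ [p, q] @ L2) = D \<union> {p, q} \<union> U"
    using L1 L2 unfolding linearizes_def by auto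
  moreover have "D \<union> {p, q} \<union> U = A" using pqA unfolding D_def U_def by blast
  moreover have "p \<notin> D" "q \<notin> D" "p \<notin> U" "q \<notin> U" "D \<inter> U = {}"
    using irr unfolding D_def U_def by auto
  then have "distinct (L1 @ [p, q] @ L2)"
    using L1 L2 pqA unfolding linearizes_def by auto
  ultimately show ?thesis unfolding linearizes_def by blast
qed

lemma list_of_images:
  assumes "set ys \<subseteq> f ` A"
  shows "\<exists>xs. set xs \<subseteq> A \<and> map f xs = ys"
  using assms
proof (induction ys)
  case (Cons y ys)
  then obtain x xs where "x \<in> A" "y = f x" "set xs \<subseteq> A" "map f xs = ys" by auto
  then show ?case by (intro exI[of _ "x # xs"]) simp
qed simp


section \<open>The stratified order generated by a list of blocks\<close>

definition block_rel :: "'a set list \<Rightarrow> 'a rel" where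
  "block_rel Bs = (\<Union>i < length Bs. \<Union>j \<in> {i<..<length Bs}. Bs ! i \<times> Bs ! j)"

definition disjoint_blocks :: "'a set list \<Rightarrow> bool" where
  "disjoint_blocks Bs \<longleftrightarrow> (\<forall>i < length Bs. Bs ! i \<noteq> {}) \<and>
     (\<forall>i < length Bs. \<forall>j < length Bs. i \<noteq> j \<longrightarrow> Bs ! i \<inter> Bs ! j = {})"

lemma step_seq_iff:
  "step_seq X R Bs \<longleftrightarrow> disjoint_blocks Bs \<and> \<Union>(set Bs) = X \<and> R = block_rel Bs"
  unfolding step_seq_def disjoint_blocks_def block_rel_def by (simp only: conj_assoc)

lemma block_rel_iff:
  "(x, y) \<in> block_rel Bs \<longleftrightarrow> (\<exists>i j. i < j \<and> j < length Bs \<and> x \<in> Bs ! i \<and> y \<in> Bs ! j)"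
  unfolding block_rel_def by fastforce

lemma block_index_unique:
  assumes "disjoint_blocks Bs" "i < length Bs" "j < length Bs" "x \<in> Bs ! i" "x \<in> Bs ! j"
  shows "i = j"
  using assms unfolding disjoint_blocks_def by blast

lemma block_index_exists:
  assumes "x \<in> \<Union>(set Bs)" obtains i where "i < length Bs" "x \<in> Bs ! i"
  using assms by (auto simp: in_set_conv_nth)

lemma in_block_in_union: "i < length Bs \<Longrightarrow> x \<in> Bs ! i \<Longrightarrow> x \<in> \<Union>(set Bs)"
  using nth_mem by blast

lemma same_block_not_related:
  assumes "disjoint_blocks Bs" "i < length Bs" "x \<in> Bs ! i" "y \<in> Bs ! i"
  shows "(x, y) \<notin> block_rel Bs"
proof
  assume "(x, y) \<in> block_rel Bs"
  then obtain i' j' where "i' < j'" "j' < length Bs" "x \<in> Bs ! i'" "y \<in> Bs ! j'"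
    unfolding block_rel_iff by blast
  with assms have "i' = i" "j' = i" using block_index_unique[OF assms(1)] by auto
  with \<open>i' < j'\<close> show False by simp
qed

lemma frown_block_rel_iff:
  assumes "disjoint_blocks Bs"
  shows "(x, y) \<in> frown (\<Union>(set Bs)) (block_rel Bs) \<longleftrightarrow>
    x \<noteq> y \<and> (\<exists>i < length Bs. x \<in> Bs ! i \<and> y \<in> Bs ! i)"
proof
  assume "(x, y) \<in> frown (\<Union>(set Bs)) (block_rel Bs)"
  then have xy: "x \<noteq> y" "x \<in> \<Union>(set Bs)" "y \<in> \<Union>(set Bs)"
    and incomparable: "(x, y) \<notin> block_rel Bs" "(y, x) \<notin> block_rel Bs"
    unfolding frown_def by auto
  obtain i j where ij: "i < length Bs" "x \<in> Bs ! i" "j < length Bs" "y \<in> Bs ! j"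
    using xy block_index_exists by metis
  have "\<not> i < j" "\<not> j < i" using ij incomparable unfolding block_rel_iff by blast+
  then have "i = j" by simp
  with xy ij show "x \<noteq> y \<and> (\<exists>i < length Bs. x \<in> Bs ! i \<and> y \<in> Bs ! i)" by blast
next
  assume "x \<noteq> y \<and> (\<exists>i < length Bs. x \<in> Bs ! i \<and> y \<in> Bs ! i)"
  then obtain i where i: "x \<noteq> y" "i < length Bs" "x \<in> Bs ! i" "y \<in> Bs ! i" by blast
  then have "(x, y) \<notin> block_rel Bs" "(y, x) \<notin> block_rel Bs"
    using same_block_not_related[OF assms i(2)] by (simp_all only: i)
  moreover have "x \<in> \<Union>(set Bs)" "y \<in> \<Union>(set Bs)"
    using in_block_in_union[OF i(2)] i(3,4) by (simp_all only:)
  ultimately show "(x, y) \<in> frown (\<Union>(set Bs)) (block_rel Bs)"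
    using i unfolding frown_def by blast
qed

lemma block_rel_stratified:
  assumes "disjoint_blocks Bs"
  shows "stratified_order (\<Union>(set Bs)) (block_rel Bs)"
proof -
  note unique = block_index_unique[OF assms]
  have "block_rel Bs \<subseteq> \<Union>(set Bs) \<times> \<Union>(set Bs)"
  proof (rule subrelI)
    fix x y assume "(x, y) \<in> block_rel Bs"
    then obtain i j where "i < j" "j < length Bs" "x \<in> Bs ! i" "y \<in> Bs ! j"
      unfolding block_rel_iff by blast
    then show "(x, y) \<in> \<Union>(set Bs) \<times> \<Union>(set Bs)"
      using in_block_in_union[of i Bs x] in_block_in_union[of j Bs y] by simp
  qed
  moreover have "irrefl (block_rel Bs)"
    unfolding irrefl_def block_rel_iff using unique by (metis order.strict_trans less_irrefl)
  moreover have "trans (block_rel Bs)"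
    unfolding trans_def block_rel_iff using unique by (metis order.strict_trans)
  moreover have "equiv (\<Union>(set Bs)) (frown (\<Union>(set Bs)) (block_rel Bs) \<union> Id_on (\<Union>(set Bs)))"
    by (rule equivI)
      (auto simp: refl_on_def sym_def trans_def frown_block_rel_iff[OF assms]
        intro: bexI[OF _ nth_mem] dest: unique)
  ultimately show ?thesis unfolding stratified_order_def partial_order_on_X_def by blast
qed


text \<open>In any stratified extension, mutually \<sqsubset>-related elements are incomparable:
  one ordering would force the other, contradicting irreflexivity.\<close>
lemma ext_mutual_sq_not_ordered:
  assumes "R \<in> ext X prec sq" "(a, b) \<in> sq" "(b, a) \<in> sq"
  shows "(a, b) \<notin> R"
proof
  assume ab: "(a, b) \<in> R"
  have "irrefl R" "trans R" "sq \<subseteq> R \<union> frown X R"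
    using assms(1) unfolding ext_def stratified_order_def partial_order_on_X_def by blast+
  moreover from this have "(b, a) \<in> R" using ab assms(3) unfolding frown_def by auto
  ultimately show False using ab unfolding irrefl_def trans_def by blast
qed


section \<open>Equivalence classes of a so-structure\<close>

locale so_struct =
  fixes X :: "'a set" and prec sq :: "'a rel"
  assumes so: "so_structure X prec sq"
begin

abbreviation cls :: "'a \<Rightarrow> 'a set" where "cls \<equiv> sq_class X sq"
abbreviation H :: "'a set rel" where "H \<equiv> hat_sq X sq"

lemma so_axioms:
  shows prec_field: "prec \<subseteq> X \<times> X" and sq_field: "sq \<subseteq> X \<times> X"
    and S1: "\<forall>a\<in>X. (a, a) \<notin> sq"
    and S2: "\<forall>a\<in>X. \<forall>b\<in>X. (a, b) \<in> prec \<longrightarrow> (a, b) \<in> sq"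
    and S3: "\<forall>a\<in>X. \<forall>b\<in>X. \<forall>c\<in>X. (a, b) \<in> sq \<and> (b, c) \<in> sq \<and> a \<noteq> c \<longrightarrow> (a, c) \<in> sq"
    and S4: "\<forall>a\<in>X. \<forall>b\<in>X. \<forall>c\<in>X. (a, b) \<in> sq \<and> (b, c) \<in> prec \<longrightarrow> (a, c) \<in> prec"
  using so unfolding so_structure_def by blast+

lemma prec_in_X: "(a, b) \<in> prec \<Longrightarrow> a \<in> X \<and> b \<in> X"
  and sq_in_X: "(a, b) \<in> sq \<Longrightarrow> a \<in> X \<and> b \<in> X"
  using prec_field sq_field by auto

lemma sq_irrefl: "(a, a) \<notin> sq"
  using S1 sq_in_X by blast

lemma prec_sq: "(a, b) \<in> prec \<Longrightarrow> (a, b) \<in> sq"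
  using S2 prec_in_X by blast

lemma sq_trans: "(a, b) \<in> sq \<Longrightarrow> (b, c) \<in> sq \<Longrightarrow> a \<noteq> c \<Longrightarrow> (a, c) \<in> sq"
  using S3 sq_in_X by blast

lemma sq_prec_prec: "(a, b) \<in> sq \<Longrightarrow> (b, c) \<in> prec \<Longrightarrow> (a, c) \<in> prec"
  using S4 sq_in_X prec_in_X by blast

definition sq_equiv :: "'a rel" where
  "sq_equiv = {(a, b). a \<in> X \<and> b \<in> X \<and> (a = b \<or> (a, b) \<in> sq \<and> (b, a) \<in> sq)}"

lemma equiv_sq_equiv: "equiv X sq_equiv"
proof (rule equivI)
  show "trans sq_equiv"
    unfolding trans_def sq_equiv_def using sq_trans by blast
qed (auto simp: refl_on_def sym_def sq_equiv_def)

lemma cls_eq_Image: "a \<in> X \<Longrightarrow> cls a = sq_equiv `` {a}"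
  unfolding sq_class_def sq_equiv_def by auto

lemma cls_subset: "cls a \<subseteq> X"
  unfolding sq_class_def by auto

lemma cls_self: "a \<in> X \<Longrightarrow> a \<in> cls a"
  unfolding sq_class_def by auto

lemma cls_of_member:
  assumes "a \<in> X" "x \<in> cls a"
  shows "cls x = cls a"
proof -
  have "x \<in> X" "(a, x) \<in> sq_equiv" using assms cls_subset cls_eq_Image by auto
  then have "sq_equiv `` {a} = sq_equiv `` {x}" using equiv_class_eq[OF equiv_sq_equiv] by blast
  then show ?thesis using assms(1) \<open>x \<in> X\<close> cls_eq_Image by simp
qed

lemma cls_eq_iff: "a \<in> X \<Longrightarrow> b \<in> X \<Longrightarrow> cls a = cls b \<longleftrightarrow> a \<in> cls b"
  using cls_of_member[of b a] cls_self[of a] by auto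

lemma sq_between_classes:
  assumes "a \<in> X" "b \<in> X" "cls a \<noteq> cls b" "a' \<in> cls a" "b' \<in> cls b" "(a', b') \<in> sq"
  shows "(a, b) \<in> sq"
proof -
  have "a \<noteq> b'" using assms cls_of_member by blast
  then have "(a, b') \<in> sq"
    using assms(4,6) sq_trans unfolding sq_class_def by blast
  moreover have "a \<noteq> b" using assms(3) by blast
  ultimately show ?thesis
    using assms(5) sq_trans unfolding sq_class_def by blast
qed

lemma hat_sq_iff:
  assumes "a \<in> X" "b \<in> X"
  shows "(cls a, cls b) \<in> H \<longleftrightarrow> cls a \<noteq> cls b \<and> (a, b) \<in> sq"
proof
  assume "(cls a, cls b) \<in> H"
  then obtain a0 b0 where "cls a = cls a0" "cls b = cls b0" "cls a0 \<noteq> cls b0"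
      "(cls a0 \<times> cls b0) \<inter> sq \<noteq> {}"
    unfolding hat_sq_def by blast
  then obtain a' b' where "cls a \<noteq> cls b" "a' \<in> cls a" "b' \<in> cls b" "(a', b') \<in> sq"
    by auto
  with assms show "cls a \<noteq> cls b \<and> (a, b) \<in> sq" using sq_between_classes by blast
next
  assume "cls a \<noteq> cls b \<and> (a, b) \<in> sq"
  moreover from this have "(a, b) \<in> (cls a \<times> cls b) \<inter> sq" using assms cls_self by blast
  ultimately show "(cls a, cls b) \<in> H" using assms unfolding hat_sq_def by blast
qed

lemma hat_sq_field: "H \<subseteq> cls ` X \<times> cls ` X"
  unfolding hat_sq_def by blast

lemma hat_sq_irrefl: "irrefl H"
  unfolding irrefl_def hat_sq_def by auto

text \<open>The lifted relation is transitive: if [a] \<sqsubset> [b] \<sqsubset> [c] but [a] = [c], then a and b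
  would be mutually \<sqsubset>-related, i.e. [a] = [b].\<close>
lemma hat_sq_trans: "trans H"
proof (rule transI)
  fix C D E assume CD: "(C, D) \<in> H" and DE: "(D, E) \<in> H"
  obtain a b where "a \<in> X" "b \<in> X" "C = cls a" "D = cls b"
    using CD hat_sq_field by blast
  moreover obtain c where "c \<in> X" "E = cls c"
    using DE hat_sq_field by blast
  ultimately have abc: "a \<in> X" "b \<in> X" "c \<in> X" "C = cls a" "D = cls b" "E = cls c" by simp_all
  then have ab: "cls a \<noteq> cls b" "(a, b) \<in> sq" and bc: "cls b \<noteq> cls c" "(b, c) \<in> sq"
    using CD DE hat_sq_iff[of a b] hat_sq_iff[of b c] by simp_all
  have "cls a \<noteq> cls c"
  proof
    assume "cls a = cls c"
    then have "c \<in> cls a" using cls_eq_iff[of c a] abc by simp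
    then have "c = a \<or> (c, a) \<in> sq" unfolding sq_class_def by blast
    then have "(b, a) \<in> sq" using bc ab sq_trans by blast
    then have "b \<in> cls a" using abc(2) ab(2) unfolding sq_class_def by blast
    then show False using cls_of_member[OF abc(1)] ab(1) by blast
  qed
  moreover from this have "(a, c) \<in> sq" using ab bc sq_trans by blast
  ultimately show "(C, E) \<in> H" using abc hat_sq_iff by simp
qed

text \<open>By (S4) and irreflexivity, \<prec>-related elements lie in different classes.\<close>
lemma prec_different_classes:
  assumes "(a, b) \<in> prec"
  shows "cls a \<noteq> cls b"
proof
  assume "cls a = cls b"
  then have "a \<in> cls b" using assms prec_in_X cls_eq_iff by blast
  then have "a = b \<or> (b, a) \<in> sq" unfolding sq_class_def by blast
  then have "(b, b) \<in> prec" using assms sq_prec_prec by blast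
  then show False using prec_sq sq_irrefl by blast
qed


section \<open>Extensions whose steps are the classes\<close>

lemma union_classes: "\<Union>(cls ` X) = X"
proof
  show "\<Union>(cls ` X) \<subseteq> X" using cls_subset by (rule UN_least)
  show "X \<subseteq> \<Union>(cls ` X)" using cls_self by blast
qed

lemma classes_disjoint_blocks:
  assumes "set Cs \<subseteq> cls ` X" "distinct Cs"
  shows "disjoint_blocks Cs"
  unfolding disjoint_blocks_def
proof (intro conjI allI impI)
  fix i assume "i < length Cs"
  then obtain c where "c \<in> X" "Cs ! i = cls c" using assms(1) nth_mem by blast
  then show "Cs ! i \<noteq> {}" using cls_self by blast
next
  fix i j assume ij: "i < length Cs" "j < length Cs" "i \<noteq> j"
  then have "Cs ! i \<noteq> Cs ! j" using assms(2) by (simp add: nth_eq_iff_index_eq)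
  obtain c where c: "c \<in> X" "Cs ! i = cls c" using ij(1) assms(1) nth_mem by blast
  obtain d where d: "d \<in> X" "Cs ! j = cls d" using ij(2) assms(1) nth_mem by blast
  show "Cs ! i \<inter> Cs ! j = {}"
  proof (rule equals0I)
    fix x assume "x \<in> Cs ! i \<inter> Cs ! j"
    then have "x \<in> cls c" "x \<in> cls d" using c(2) d(2) by simp_all
    then have "cls x = cls c" "cls x = cls d"
      using cls_of_member[OF c(1)] cls_of_member[OF d(1)] by blast+
    with \<open>Cs ! i \<noteq> Cs ! j\<close> c(2) d(2) show False by simp
  qed
qed

lemma linearization_position:
  assumes "linearizes H (cls ` X) Cs" "a \<in> X"
  obtains i where "i < length Cs" "Cs ! i = cls a"
  using assms unfolding linearizes_def by (metis imageI in_set_conv_nth)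

lemma linearization_step_seq:
  assumes "linearizes H (cls ` X) Cs"
  shows "step_seq X (block_rel Cs) Cs"
  using assms classes_disjoint_blocks union_classes
  unfolding step_seq_iff linearizes_def by auto

lemma linearization_respects_hat_sq:
  assumes lin: "linearizes H (cls ` X) Cs" and "a \<in> X" "b \<in> X" "(cls a, cls b) \<in> H"
  shows "(a, b) \<in> block_rel Cs"
proof -
  obtain i j where i: "i < length Cs" "Cs ! i = cls a" and j: "j < length Cs" "Cs ! j = cls b"
    using linearization_position[OF lin] assms(2,3) by metis
  have "\<not> j < i"
  proof
    assume "j < i"
    then have "(Cs ! i, Cs ! j) \<notin> H"
      using lin i(1) sorted_wrt_nth_less unfolding linearizes_def by fastforce
    with i j assms(4) show False by simp
  qed
  moreover have "i \<noteq> j" using i j assms hat_sq_iff by auto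
  ultimately show ?thesis
    using i j assms(2,3) cls_self unfolding block_rel_iff by (metis linorder_neqE_nat)
qed

lemma linearization_separates_classes:
  assumes lin: "linearizes H (cls ` X) Cs" and "a \<in> X" "b \<in> X" "cls a \<noteq> cls b"
  shows "(a, b) \<in> block_rel Cs \<or> (b, a) \<in> block_rel Cs"
proof -
  obtain i j where i: "i < length Cs" "Cs ! i = cls a" and j: "j < length Cs" "Cs ! j = cls b"
    using linearization_position[OF lin] assms(2,3) by metis
  then have "i \<noteq> j" using assms(4) by auto
  then show ?thesis
    using i j assms(2,3) cls_self unfolding block_rel_iff by (metis linorder_neqE_nat)
qed

text \<open>The block order of such a listing is a stratified extension of S: \<prec> and \<sqsubset>
  between different classes are realised by H, and \<sqsubset> inside a class by incomparability.\<close>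
lemma linearization_ext:
  assumes lin: "linearizes H (cls ` X) Cs"
  shows "block_rel Cs \<in> ext X prec sq"
proof -
  have blocks: "disjoint_blocks Cs" and union: "\<Union>(set Cs) = X"
    using linearization_step_seq[OF lin] unfolding step_seq_iff by auto
  have "prec \<subseteq> block_rel Cs"
  proof (rule subrelI)
    fix a b assume "(a, b) \<in> prec"
    then show "(a, b) \<in> block_rel Cs"
      using linearization_respects_hat_sq[OF lin] prec_in_X prec_sq prec_different_classes
        hat_sq_iff by blast
  qed
  moreover have "sq \<subseteq> block_rel Cs \<union> frown X (block_rel Cs)"
  proof (rule subrelI)
    fix a b assume ab: "(a, b) \<in> sq"
    then have X: "a \<in> X" "b \<in> X" "a \<noteq> b" using sq_in_X sq_irrefl by blast+
    show "(a, b) \<in> block_rel Cs \<union> frown X (block_rel Cs)"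
    proof (cases "cls a = cls b")
      case True
      obtain i where "i < length Cs" "Cs ! i = cls b"
        using linearization_position[OF lin X(2)] by blast
      then have "(a, b) \<in> frown X (block_rel Cs)"
        using frown_block_rel_iff[OF blocks] union X True cls_self by metis
      then show ?thesis ..
    next
      case False
      then show ?thesis using linearization_respects_hat_sq[OF lin] hat_sq_iff X ab by blast
    qed
  qed
  ultimately show ?thesis
    using block_rel_stratified[OF blocks] unfolding ext_def union by blast
qed

lemma linearization_representatives:
  assumes "linearizes H (cls ` X) Cs"
  obtains ds where "set ds \<subseteq> X" "map cls ds = Cs"
  using list_of_images[of Cs cls X] assms unfolding linearizes_def by auto


lemma sq_class_iff_incomparable:
  assumes "finite X" "a \<in> X" "b \<in> X"
  shows "a \<in> cls b \<longleftrightarrow> (\<forall>R\<in>ext X prec sq. a = b \<or> (a, b) \<in> frown X R)"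
proof
  assume "a \<in> cls b"
  then have mutual: "a = b \<or> (a, b) \<in> sq \<and> (b, a) \<in> sq" unfolding sq_class_def by blast
  show "\<forall>R\<in>ext X prec sq. a = b \<or> (a, b) \<in> frown X R"
  proof
    fix R assume R: "R \<in> ext X prec sq"
    show "a = b \<or> (a, b) \<in> frown X R"
    proof (cases "a = b")
      case False
      then have "(a, b) \<in> sq" "(b, a) \<in> sq" using mutual by blast+
      then have "(a, b) \<notin> R" "(b, a) \<notin> R" using ext_mutual_sq_not_ordered[OF R] by blast+
      with False assms(2,3) show ?thesis unfolding frown_def by blast
    qed simp
  qed
next
  assume incomparable: "\<forall>R\<in>ext X prec sq. a = b \<or> (a, b) \<in> frown X R"
  obtain Cs where lin: "linearizes H (cls ` X) Cs"
    using linearization_exists[OF finite_imageI[OF assms(1)] hat_sq_irrefl hat_sq_trans] by blast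
  show "a \<in> cls b"
  proof (rule ccontr)
    assume "a \<notin> cls b"
    then have "cls a \<noteq> cls b" "a \<noteq> b" using cls_self[OF assms(2)] by auto
    then have "(a, b) \<in> block_rel Cs \<or> (b, a) \<in> block_rel Cs"
      using linearization_separates_classes[OF lin assms(2,3)] by blast
    moreover have "(a, b) \<in> frown X (block_rel Cs)"
      using incomparable linearization_ext[OF lin] \<open>a \<noteq> b\<close> by blast
    ultimately show False unfolding frown_def by blast
  qed
qed

lemma class_step_extension:
  assumes "finite X"
  shows "\<exists>R\<in>ext X prec sq. \<exists>gs. set gs \<subseteq> X \<and> step_seq X R (map cls gs)"
proof -
  obtain Cs where lin: "linearizes H (cls ` X) Cs"
    using linearization_exists[OF finite_imageI[OF assms] hat_sq_irrefl hat_sq_trans] by blast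
  obtain gs where "set gs \<subseteq> X" "map cls gs = Cs" using linearization_representatives[OF lin] .
  then show ?thesis using linearization_ext[OF lin] linearization_step_seq[OF lin] by blast
qed

lemma covering_classes_adjacent:
  assumes "finite X" "a \<in> X" "b \<in> X" "(cls a, cls b) \<in> cov H"
  shows "\<exists>R\<in>ext X prec sq. \<exists>ds. set ds \<subseteq> X \<and> step_seq X R (map cls ds) \<and>
           (\<exists>i. Suc i < length ds \<and> a \<in> cls (ds ! i) \<and> b \<in> cls (ds ! Suc i))"
proof -
  obtain L1 L2 where lin: "linearizes H (cls ` X) (L1 @ [cls a, cls b] @ L2)"
    using linearization_with_cover[OF finite_imageI[OF assms(1)] hat_sq_irrefl hat_sq_trans
        hat_sq_field assms(4)] by blast
  obtain ds where ds: "set ds \<subseteq> X" "map cls ds = L1 @ [cls a, cls b] @ L2"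
    using linearization_representatives[OF lin] .
  define i where "i = length L1"
  have "Suc i < length ds" using arg_cong[OF ds(2), of length] by (simp add: i_def)
  moreover from this have "cls (ds ! i) = cls a" "cls (ds ! Suc i) = cls b"
    using ds(2) nth_map[symmetric, of _ ds cls] by (simp_all add: i_def nth_append)
  ultimately show ?thesis
    using ds linearization_ext[OF lin] linearization_step_seq[OF lin] assms(2,3) cls_self
    by metis
qed

end


theorem mainTheorem2:
  fixes X :: "'a set" and prec sq :: "'a rel"
  assumes "finite X" and "so_structure X prec sq"
  shows "(\<forall>a\<in>X. \<forall>b\<in>X. a \<in> sq_class X sq b \<longleftrightarrow>
            (\<forall>R\<in>ext X prec sq. a = b \<or> (a, b) \<in> frown X R))
       \<and> (\<exists>R\<in>ext X prec sq. \<exists>gs. set gs \<subseteq> X \<and> step_seq X R (map (sq_class X sq) gs))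
       \<and> (\<forall>a\<in>X. \<forall>b\<in>X. (sq_class X sq a, sq_class X sq b) \<in> cov (hat_sq X sq) \<longrightarrow>
            (\<exists>R\<in>ext X prec sq. \<exists>ds. set ds \<subseteq> X \<and> step_seq X R (map (sq_class X sq) ds) \<and>
               (\<exists>i. Suc i < length ds \<and> a \<in> sq_class X sq (ds ! i)
                    \<and> b \<in> sq_class X sq (ds ! Suc i))))"
proof -
  interpret so_struct X prec sq using assms(2) by (rule so_struct.intro)
  show ?thesis
    using sq_class_iff_incomparable[OF assms(1)] class_step_extension[OF assms(1)]
      covering_classes_adjacent[OF assms(1)] by blast
qed

end
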